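(* Let $X$ be a set, $B=(B,+,0)$ a unitary magma and $(A,k,q,s,p)$ a retraction point from $X$ to $B$. Let $Z$ be a unitary magma and $g\colon Z\to B$ a morphism of unitary magmas, and let $A\times_B Z=\{(a,z)\in A\times Z\mid p(a)=g(z)\}$ (a sub-unitary-magma of the product $A\times Z$), with projections $\pi_1,\pi_2$. Then $$\big(A\times_B Z,\ \langle k,0\rangle,\ q\pi_1,\ \langle sg,1\rangle,\ \pi_2\big)$$ is a retraction point from $X$ to $Z$, where $\langle k,0\rangle(x)=(k(x),0)$ and $\langle sg,1\rangle(z)=(s(g(z)),z)$.
   Context: A unitary magma is a set with a binary operation $+$ and an element $0$ with $b+0=b=0+b$ for all $b$; morphisms preserve $+$ and $0$; the product $A\times Z$ has componentwise operation. Given a set $X$ and a unitary magma $B$, a retraction point from $X$ to $B$ is a tuple $(A,k,q,s,p)$ where $A=(A,+,0)$ is a unitary magma, $k\colon X\to A$ and $q\colon A\to X$ are maps, $s\colon B\to A$ and $p\colon A\to B$ are morphisms of unitary magmas, and $p(s(b))=b$, $q(k(x))=x$, $p(k(x))=0$, $q(s(b))=q(0)$, and $k(q(a))+s(p(a))=a$ for all $x\in X$, $b\in B$, $a\in A$. *)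

theory Defs
  imports Main
begin

definition unitary_magma :: "'a set \<Rightarrow> ('a \<Rightarrow> 'a \<Rightarrow> 'a) \<Rightarrow> 'a \<Rightarrow> bool" where
  "unitary_magma M f e \<longleftrightarrow> e \<in> M \<and> (\<forall>a\<in>M. \<forall>b\<in>M. f a b \<in> M)
     \<and> (\<forall>b\<in>M. f b e = b \<and> f e b = b)"

definition um_hom :: "'a set \<Rightarrow> ('a \<Rightarrow> 'a \<Rightarrow> 'a) \<Rightarrow> 'a \<Rightarrow>
    'b set \<Rightarrow> ('b \<Rightarrow> 'b \<Rightarrow> 'b) \<Rightarrow> 'b \<Rightarrow> ('a \<Rightarrow> 'b) \<Rightarrow> bool" where
  "um_hom M f e M' f' e' h \<longleftrightarrow> (\<forall>a\<in>M. h a \<in> M')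
     \<and> (\<forall>a\<in>M. \<forall>b\<in>M. h (f a b) = f' (h a) (h b)) \<and> h e = e'"

definition retraction_point :: "'x set \<Rightarrow> 'b set \<Rightarrow> ('b \<Rightarrow> 'b \<Rightarrow> 'b) \<Rightarrow> 'b \<Rightarrow>
    'a set \<Rightarrow> ('a \<Rightarrow> 'a \<Rightarrow> 'a) \<Rightarrow> 'a \<Rightarrow>
    ('x \<Rightarrow> 'a) \<Rightarrow> ('a \<Rightarrow> 'x) \<Rightarrow> ('b \<Rightarrow> 'a) \<Rightarrow> ('a \<Rightarrow> 'b) \<Rightarrow> bool" where
  "retraction_point X B addB zB A addA zA k q s p \<longleftrightarrow>
     unitary_magma A addA zA
     \<and> (\<forall>x\<in>X. k x \<in> A) \<and> (\<forall>a\<in>A. q a \<in> X)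
     \<and> um_hom B addB zB A addA zA s
     \<and> um_hom A addA zA B addB zB p
     \<and> (\<forall>b\<in>B. p (s b) = b)
     \<and> (\<forall>x\<in>X. q (k x) = x)
     \<and> (\<forall>x\<in>X. p (k x) = zB)
     \<and> (\<forall>b\<in>B. q (s b) = q zA)
     \<and> (\<forall>a\<in>A. addA (k (q a)) (s (p a)) = a)"

end

theory Submission
  imports Defs
begin

text \<open>The pullback \<open>A \<times>\<^sub>B Z\<close> of \<open>p\<close> along \<open>g\<close> inherits the componentwise structure
  because \<open>p\<close> and \<open>g\<close> are both morphisms into \<open>B\<close>; the section \<open>s\<close> of \<open>p\<close> pulls back to
  the section \<open>\<langle>s g, 1\<rangle>\<close> of \<open>\<pi>\<^sub>2\<close>. The remaining axioms are those of \<open>(A, k, q, s, p)\<close> read in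
  the first component, using \<open>p a = g z\<close> to rewrite \<open>s (p a)\<close> as \<open>s (g z)\<close>.\<close>

abbreviation fibre_product :: "'a set \<Rightarrow> ('a \<Rightarrow> 'b) \<Rightarrow> 'z set \<Rightarrow> ('z \<Rightarrow> 'b) \<Rightarrow> ('a \<times> 'z) set" where
  "fibre_product A p Z g \<equiv> {(a, z). a \<in> A \<and> z \<in> Z \<and> p a = g z}"

abbreviation prod_op :: "('a \<Rightarrow> 'a \<Rightarrow> 'a) \<Rightarrow> ('z \<Rightarrow> 'z \<Rightarrow> 'z) \<Rightarrow> 'a \<times> 'z \<Rightarrow> 'a \<times> 'z \<Rightarrow> 'a \<times> 'z" where
  "prod_op addA addZ \<equiv> \<lambda>(a, z) (a', z'). (addA a a', addZ z z')"

lemma unitary_magma_fibre_product: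
  assumes "unitary_magma A addA zA" and "unitary_magma Z addZ zZ"
    and "um_hom A addA zA B addB zB p" and "um_hom Z addZ zZ B addB zB g"
  shows "unitary_magma (fibre_product A p Z g) (prod_op addA addZ) (zA, zZ)"
  using assms unfolding unitary_magma_def um_hom_def by auto

lemma um_hom_snd_fibre_product:
  "um_hom (fibre_product A p Z g) (prod_op addA addZ) (zA, zZ) Z addZ zZ snd"
  unfolding um_hom_def by auto

lemma um_hom_section_fibre_product:
  assumes "um_hom B addB zB A addA zA s" and "um_hom Z addZ zZ B addB zB g"
    and "\<forall>b\<in>B. p (s b) = b"
  shows "um_hom Z addZ zZ (fibre_product A p Z g) (prod_op addA addZ) (zA, zZ) (\<lambda>z. (s (g z), z))"
  using assms unfolding um_hom_def by auto

theorem proposition2p2: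
  fixes X :: "'x set"
    and B :: "'b set" and addB :: "'b \<Rightarrow> 'b \<Rightarrow> 'b" and zB :: 'b
    and A :: "'a set" and addA :: "'a \<Rightarrow> 'a \<Rightarrow> 'a" and zA :: 'a
    and k :: "'x \<Rightarrow> 'a" and q :: "'a \<Rightarrow> 'x" and s :: "'b \<Rightarrow> 'a" and p :: "'a \<Rightarrow> 'b"
    and Z :: "'z set" and addZ :: "'z \<Rightarrow> 'z \<Rightarrow> 'z" and zZ :: 'z
    and g :: "'z \<Rightarrow> 'b"
  assumes "unitary_magma B addB zB"
    and "retraction_point X B addB zB A addA zA k q s p"
    and "unitary_magma Z addZ zZ"
    and "um_hom Z addZ zZ B addB zB g"
  shows "retraction_point X Z addZ zZ
           {(a, z). a \<in> A \<and> z \<in> Z \<and> p a = g z}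
           (\<lambda>(a, z) (a', z'). (addA a a', addZ z z')) (zA, zZ)
           (\<lambda>x. (k x, zZ)) (\<lambda>az. q (fst az)) (\<lambda>z. (s (g z), z)) snd"
proof -
  from assms(2) have A: "unitary_magma A addA zA"
    and s: "um_hom B addB zB A addA zA s" and p: "um_hom A addA zA B addB zB p"
    and ps: "\<forall>b\<in>B. p (s b) = b"
    and decompose: "\<forall>a\<in>A. addA (k (q a)) (s (p a)) = a"
    unfolding retraction_point_def by auto
  have "zZ \<in> Z" "g zZ = zB" "\<forall>z\<in>Z. g z \<in> B" "\<forall>z\<in>Z. addZ zZ z = z"
    using assms(3,4) unfolding unitary_magma_def um_hom_def by auto
  moreover have "addA (k (q a)) (s (g z)) = a" if "a \<in> A" "p a = g z" for a z
    using decompose that by metis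
  ultimately show ?thesis
    using assms(2) unitary_magma_fibre_product[OF A assms(3) p assms(4)]
      um_hom_snd_fibre_product um_hom_section_fibre_product[OF s assms(4) ps]
    unfolding retraction_point_def by auto
qed

end
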